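(* Let $\lambda$ be Lebesgue measure on $[0,1)$. For every sequence $(x_n)_{n\ge1}$ in $[0,1)$ and every scale sequence $(s_n)_{n\ge1}$, the function $\omega(x)=\liminf_{n\to\infty} s_n\,|x_n-x|$ satisfies $\omega(x)\in\{0,\infty\}$ for $\lambda$-almost every $x\in[0,1)$. That is, $\lambda$ is decisive.
   Context: A scale sequence is a sequence of positive reals $s_n$ with $s_n\to\infty$. A Borel probability measure $\nu$ on a metric space $(X,d)$ is decisive if for every sequence $(x_n)$ in $X$ and every scale sequence $(s_n)$, the function $\omega(x)=\liminf_n s_n d(x_n,x)$ lies in $\{0,\infty\}$ for $\nu$-a.e. $x$. *)

theory Defs
  imports "HOL-Analysis.Analysis"
begin

definition scale_seq :: "(nat \<Rightarrow> real) \<Rightarrow> bool" where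
  "scale_seq s \<longleftrightarrow> (\<forall>n. 0 < s n) \<and> filterlim s at_top sequentially"

definition decisive :: "'a measure \<Rightarrow> ('a \<Rightarrow> 'a \<Rightarrow> real) \<Rightarrow> bool" where
  "decisive M d \<longleftrightarrow>
     (\<forall>xs s. (\<forall>n. xs n \<in> space M) \<longrightarrow> scale_seq s \<longrightarrow>
        (AE x in M. liminf (\<lambda>n. ereal (s n * d (xs n) x)) \<in> {0, \<infinity>}))"

end

theory Submission imports Defs begin

text \<open>If \<open>0 < liminf s\<^sub>n |x\<^sub>n - x| < \<infinity>\<close>, then for rationals \<open>0 < c' < c\<close> and some \<open>N\<close> the point
  \<open>x\<close> lies in the set \<open>S\<close> of points with \<open>s\<^sub>n |x\<^sub>n - x| \<ge> c'\<close> for all \<open>n \<ge> N\<close> and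
  \<open>s\<^sub>n |x\<^sub>n - x| < c\<close> infinitely often; there are countably many such sets. Each of them is null:
  around any of its points \<open>x\<close>, for suitable large \<open>n\<close>, the ball of radius \<open>(c + c')/s\<^sub>n\<close> about
  \<open>x\<close> contains the ball of radius \<open>c'/s\<^sub>n\<close> about \<open>x\<^sub>n\<close>, which misses \<open>S\<close>. So \<open>S\<close> has density at
  most \<open>c/(c + c') < 1\<close> in arbitrarily small balls around each of its points, and a Vitali
  covering argument shows that such a set has measure zero.\<close>

lemma emeasure_lborel_ball_real: "0 \<le> r \<Longrightarrow> emeasure lborel (ball (a::real) r) = ennreal (2 * r)"
  by (simp add: ball_eq_greaterThanLessThan)

lemma emeasure_lborel_ball_diff_ball_real:
  fixes x z :: real
  assumes "0 \<le> \<rho>" "\<rho> \<le> r" "ball z \<rho> \<subseteq> ball x r"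
  shows "emeasure lborel (ball x r - ball z \<rho>) = ennreal (2 * (r - \<rho>))"
proof -
  have "emeasure lborel (ball x r - ball z \<rho>) = emeasure lborel (ball x r) - emeasure lborel (ball z \<rho>)"
    using assms by (intro emeasure_Diff) (auto simp: emeasure_lborel_ball_real)
  also have "\<dots> = ennreal (2 * (r - \<rho>))"
    using assms by (simp add: emeasure_lborel_ball_real ennreal_minus algebra_simps)
  finally show ?thesis .
qed

definition sparse_at_small_scales :: "real \<Rightarrow> 'a::euclidean_space set \<Rightarrow> bool" where
  "sparse_at_small_scales \<theta> S \<longleftrightarrow> (\<forall>x\<in>S. \<forall>d>0. \<exists>a r. 0 < r \<and> r < d \<and> x \<in> ball a r \<and>
     emeasure lborel (S \<inter> ball a r) \<le> ennreal \<theta> * emeasure lborel (ball a r))"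

lemma emeasure_le_mult_open_superset_if_sparse:
  fixes S U :: "'a::euclidean_space set"
  assumes S: "S \<in> sets borel" and U: "open U" "S \<subseteq> U"
    and sparse: "sparse_at_small_scales \<theta> S"
  shows "emeasure lborel S \<le> ennreal \<theta> * emeasure lborel U"
proof -
  define K where "K = {(a, r). 0 < r \<and> ball a r \<subseteq> U \<and>
     emeasure lborel (S \<inter> ball a r) \<le> ennreal \<theta> * emeasure lborel (ball a r)}"
  have cover: "\<exists>i. i \<in> K \<and> x \<in> ball (fst i) (snd i) \<and> snd i < d" if "x \<in> S" "0 < d" for x d
  proof -
    obtain \<epsilon> where \<epsilon>: "\<epsilon> > 0" "ball x \<epsilon> \<subseteq> U"
      using U \<open>x \<in> S\<close> open_contains_ball by blast
    have "0 < min d (\<epsilon>/2)"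
      using \<open>0 < d\<close> \<epsilon>(1) by simp
    then obtain a r where ar: "0 < r" "r < min d (\<epsilon>/2)" "x \<in> ball a r"
      "emeasure lborel (S \<inter> ball a r) \<le> ennreal \<theta> * emeasure lborel (ball a r)"
      using sparse \<open>x \<in> S\<close> unfolding sparse_at_small_scales_def by blast
    have "ball a r \<subseteq> ball x \<epsilon>"
    proof
      fix y assume "y \<in> ball a r"
      then show "y \<in> ball x \<epsilon>"
        using ar(2,3) dist_triangle[of x y a] by (simp add: dist_commute)
    qed
    then show ?thesis
      using ar \<epsilon> unfolding K_def by (intro exI[of _ "(a, r)"]) auto
  qed
  define B where "B i = ball (fst i) (snd i)" for i :: "'a \<times> real"
  obtain C where C: "countable C" "C \<subseteq> K" "pairwise (\<lambda>i j. disjnt (B i) (B j)) C"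
    and "negligible (S - (\<Union>i\<in>C. B i))"
    using Vitali_covering_theorem_balls[of S K fst snd, OF cover] unfolding B_def by blast
  moreover have "S - (\<Union>i\<in>C. B i) \<in> sets borel"
    using S by (intro sets.Diff) (auto simp: B_def intro!: borel_open)
  ultimately have null: "S - (\<Union>i\<in>C. B i) \<in> null_sets lborel"
    by (simp add: negligible_iff_null_sets null_sets_completion_iff)
  have disj: "disjoint_family_on B C"
    using C(3) unfolding disjoint_family_on_def pairwise_def disjnt_def by blast
  have "emeasure lborel S = emeasure lborel ((\<Union>i\<in>C. S \<inter> B i) \<union> (S - (\<Union>i\<in>C. B i)))"
    by (rule arg_cong[where f = "emeasure lborel"]) blast
  also have "\<dots> = emeasure lborel (\<Union>i\<in>C. S \<inter> B i)"
    using S C(1) null by (intro emeasure_Un_null_set) (auto simp: B_def intro!: sets.countable_UN'')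
  also have "\<dots> = (\<integral>\<^sup>+i. emeasure lborel (S \<inter> B i) \<partial>count_space C)"
    using S C(1) disjoint_family_on_bisimulation[OF disj, of "\<lambda>i. S \<inter> B i"]
    by (intro emeasure_UN_countable) (auto simp: B_def)
  also have "\<dots> \<le> (\<integral>\<^sup>+i. ennreal \<theta> * emeasure lborel (B i) \<partial>count_space C)"
    using C(2) by (intro nn_integral_mono) (auto simp: K_def B_def)
  also have "\<dots> = ennreal \<theta> * (\<integral>\<^sup>+i. emeasure lborel (B i) \<partial>count_space C)"
    by (rule nn_integral_cmult) simp
  also have "(\<integral>\<^sup>+i. emeasure lborel (B i) \<partial>count_space C) = emeasure lborel (\<Union>i\<in>C. B i)"
    using C(1) disj by (intro emeasure_UN_countable[symmetric]) (auto simp: B_def[abs_def])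
  also have "emeasure lborel (\<Union>i\<in>C. B i) \<le> emeasure lborel U"
    using C(2) U(1) by (intro emeasure_mono) (fastforce simp: K_def B_def)+
  finally show ?thesis
    by (simp add: mult_left_mono)
qed

lemma null_sets_lborel_if_sparse_at_small_scales:
  fixes S :: "'a::euclidean_space set"
  assumes S: "S \<in> sets borel" and finite: "emeasure lborel S < \<infinity>"
    and \<theta>: "0 \<le> \<theta>" "\<theta> < 1" and sparse: "sparse_at_small_scales \<theta> S"
  shows "S \<in> null_sets lborel"
proof -
  define m where "m = measure lborel S"
  have Sm: "emeasure lborel S = ennreal m" and "0 \<le> m"
    using finite by (simp_all add: m_def emeasure_eq_ennreal_measure)
  have "(1 - \<theta>) * m \<le> 0 + \<eta>" if "\<eta> > 0" for \<eta>
  proof -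
    obtain U where U: "open U" "S \<subseteq> U" "emeasure lborel (U - S) < \<eta>"
      using outer_regular_lborel[OF S \<open>\<eta> > 0\<close>] by blast
    have "emeasure lborel U = emeasure lborel (S \<union> (U - S))"
      using U(2) by (simp add: Un_absorb1)
    also have "\<dots> \<le> emeasure lborel S + emeasure lborel (U - S)"
      using S U(1) by (intro emeasure_subadditive) auto
    also have "\<dots> \<le> ennreal (m + \<eta>)"
      using Sm U(3) \<open>0 \<le> m\<close> \<open>\<eta> > 0\<close> by (simp add: ennreal_plus)
    finally have "ennreal \<theta> * emeasure lborel U \<le> ennreal \<theta> * ennreal (m + \<eta>)"
      by (rule mult_left_mono) simp
    then have "ennreal m \<le> ennreal (\<theta> * (m + \<eta>))"
      using emeasure_le_mult_open_superset_if_sparse[OF S U(1,2) sparse] Sm \<theta>(1) \<open>0 \<le> m\<close> \<open>\<eta> > 0\<close>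
      by (simp add: ennreal_mult)
    then have "m \<le> \<theta> * (m + \<eta>)"
      using \<theta>(1) \<open>0 \<le> m\<close> \<open>\<eta> > 0\<close> by simp
    moreover have "\<theta> * \<eta> \<le> \<eta>"
      using \<theta> \<open>\<eta> > 0\<close> by simp
    ultimately show ?thesis
      by (simp add: algebra_simps)
  qed
  then have "(1 - \<theta>) * m \<le> 0"
    by (rule field_le_epsilon)
  then have "m = 0"
    using \<theta>(2) \<open>0 \<le> m\<close> by (simp add: mult_le_0_iff)
  then show ?thesis
    using S Sm by (intro null_setsI) auto
qed

definition scaled_dist_band :: "(nat \<Rightarrow> real) \<Rightarrow> (nat \<Rightarrow> real) \<Rightarrow> real \<Rightarrow> real \<Rightarrow> nat \<Rightarrow> real set"
  where "scaled_dist_band xs s c' c N = {x. (\<forall>n\<ge>N. c' \<le> s n * dist (xs n) x) \<and>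
           (\<exists>\<^sub>F n in sequentially. s n * dist (xs n) x < c)}"

lemma scaled_dist_band_borel: "scaled_dist_band xs s c' c N \<in> sets borel"
proof -
  have "scaled_dist_band xs s c' c N = (\<Inter>n\<in>{N..}. {x. c' \<le> s n * dist (xs n) x}) \<inter>
     (\<Inter>m. \<Union>n\<in>{m..}. {x. s n * dist (xs n) x < c})"
    unfolding scaled_dist_band_def frequently_sequentially by auto
  also have "\<dots> \<in> sets borel"
    by measurable
  finally show ?thesis .
qed

lemma sparse_at_small_scales_subset_scaled_dist_band:
  assumes s: "scale_seq s" and "0 < c" "0 < c'" and T: "T \<subseteq> scaled_dist_band xs s c' c N"
  shows "sparse_at_small_scales (c / (c + c')) T"
  unfolding sparse_at_small_scales_def
proof (intro ballI allI impI)
  fix x and d :: real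
  assume "x \<in> T" "0 < d"
  then have close: "\<exists>\<^sub>F n in sequentially. s n * dist (xs n) x < c"
    using T by (auto simp: scaled_dist_band_def)
  have "\<forall>\<^sub>F n in sequentially. (c + c') / d < s n \<and> N \<le> n"
    using s by (auto simp: scale_seq_def filterlim_at_top_dense intro: eventually_conj eventually_ge_at_top)
  from frequently_eventually_frequently[OF close this]
  obtain n where n: "s n * dist (xs n) x < c" "(c + c') / d < s n" "N \<le> n"
    using frequently_ex by blast
  have "0 < s n" "0 < c + c'"
    using s \<open>0 < c\<close> \<open>0 < c'\<close> by (simp_all add: scale_seq_def)
  define r where "r = (c + c') / s n"
  define \<rho> where "\<rho> = c' / s n"
  have "0 < \<rho>" "\<rho> < r" "r < d"
    using \<open>0 < s n\<close> \<open>0 < c\<close> \<open>0 < c'\<close> \<open>0 < d\<close> n(2)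
    by (simp_all add: r_def \<rho>_def divide_strict_right_mono pos_divide_less_eq mult.commute)
  have "dist (xs n) x < c / s n"
    using n(1) \<open>0 < s n\<close> by (simp add: pos_less_divide_eq mult.commute)
  then have inner: "ball (xs n) \<rho> \<subseteq> ball x r"
    by (simp add: ball_subset_ball_iff r_def \<rho>_def add_divide_distrib)
  have "T \<inter> ball x r \<subseteq> ball x r - ball (xs n) \<rho>"
  proof
    fix y
    assume y: "y \<in> T \<inter> ball x r"
    then have "c' \<le> s n * dist (xs n) y"
      using T n(3) by (auto simp: scaled_dist_band_def)
    then have "\<rho> \<le> dist (xs n) y"
      using \<open>0 < s n\<close> by (simp add: \<rho>_def pos_divide_le_eq mult.commute)
    then show "y \<in> ball x r - ball (xs n) \<rho>"
      using y by auto
  qed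
  then have "emeasure lborel (T \<inter> ball x r) \<le> emeasure lborel (ball x r - ball (xs n) \<rho>)"
    by (intro emeasure_mono) auto
  also have "\<dots> = ennreal (2 * (r - \<rho>))"
    using \<open>0 < \<rho>\<close> \<open>\<rho> < r\<close> inner by (intro emeasure_lborel_ball_diff_ball_real) auto
  also have "2 * (r - \<rho>) = c / (c + c') * (2 * r)"
  proof -
    have "(c + c') * s n \<noteq> 0"
      using \<open>0 < s n\<close> \<open>0 < c + c'\<close> by simp
    then show ?thesis
      using \<open>0 < s n\<close> \<open>0 < c + c'\<close> by (simp add: r_def \<rho>_def field_simps)
  qed
  also have "ennreal \<dots> = ennreal (c / (c + c')) * emeasure lborel (ball x r)"
    using \<open>0 < \<rho>\<close> \<open>\<rho> < r\<close> \<open>0 < c\<close> \<open>0 < c'\<close>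
    by (subst emeasure_lborel_ball_real) (auto simp del: times_divide_eq_left intro: ennreal_mult)
  finally show "\<exists>a r. 0 < r \<and> r < d \<and> x \<in> ball a r \<and>
      emeasure lborel (T \<inter> ball a r) \<le> ennreal (c / (c + c')) * emeasure lborel (ball a r)"
    using \<open>0 < \<rho>\<close> \<open>\<rho> < r\<close> \<open>r < d\<close> by (intro exI[of _ x] exI[of _ r]) auto
qed

lemma null_sets_scaled_dist_band_Int:
  assumes "scale_seq s" "0 < c" "0 < c'" "A \<in> sets borel" "emeasure lborel A < \<infinity>"
  shows "scaled_dist_band xs s c' c N \<inter> A \<in> null_sets lborel"
proof (rule null_sets_lborel_if_sparse_at_small_scales)
  show "sparse_at_small_scales (c / (c + c')) (scaled_dist_band xs s c' c N \<inter> A)"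
    using assms by (intro sparse_at_small_scales_subset_scaled_dist_band) auto
  show "emeasure lborel (scaled_dist_band xs s c' c N \<inter> A) < \<infinity>"
    using assms by (intro le_less_trans[OF emeasure_mono[OF Int_lower2]]) auto
  show "scaled_dist_band xs s c' c N \<inter> A \<in> sets borel"
    using assms(4) scaled_dist_band_borel by (rule sets.Int[rotated])
  show "0 \<le> c / (c + c')" "c / (c + c') < 1"
    using assms(2,3) by simp_all
qed

lemma liminf_ereal_between_rationals:
  fixes f :: "nat \<Rightarrow> real"
  assumes nonneg: "\<And>n. 0 \<le> f n" and L: "liminf (\<lambda>n. ereal (f n)) \<notin> {0, \<infinity>}"
  obtains c' c N where "c' \<in> \<rat>" "c \<in> \<rat>" "0 < c'" "0 < c"
    "\<forall>n\<ge>N. c' \<le> f n" "\<exists>\<^sub>F n in sequentially. f n < c"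
proof -
  have "0 \<le> liminf (\<lambda>n. ereal (f n))"
    using nonneg by (intro Liminf_bounded always_eventually) simp
  with L obtain l where l: "liminf (\<lambda>n. ereal (f n)) = ereal l" "0 < l"
    by (cases "liminf (\<lambda>n. ereal (f n))") auto
  obtain c' where c': "c' \<in> \<rat>" "0 < c'" "c' < l"
    using Rats_dense_in_real[OF \<open>0 < l\<close>] by blast
  obtain c where c: "c \<in> \<rat>" "l < c"
    using Rats_dense_in_real[of l "l + 1"] by auto
  have "\<forall>\<^sub>F n in sequentially. ereal c' < ereal (f n)"
    using c' l by (intro less_LiminfD) simp
  then obtain N where "\<forall>n\<ge>N. c' \<le> f n"
    unfolding eventually_sequentially by (auto intro: less_imp_le)
  moreover have "\<exists>\<^sub>F n in sequentially. f n < c"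
  proof (rule ccontr)
    assume "\<not> (\<exists>\<^sub>F n in sequentially. f n < c)"
    then have "\<forall>\<^sub>F n in sequentially. ereal c \<le> ereal (f n)"
      unfolding not_frequently by (auto elim!: eventually_mono)
    then have "ereal c \<le> liminf (\<lambda>n. ereal (f n))"
      by (rule Liminf_bounded)
    then show False
      using l c by simp
  qed
  ultimately show ?thesis
    using that c c' l by auto
qed

lemma AE_liminf_scaled_dist_0_or_infinity:
  fixes xs :: "nat \<Rightarrow> real"
  assumes s: "scale_seq s" and A: "A \<in> sets borel" "emeasure lborel A < \<infinity>"
  shows "AE x in lborel. x \<in> A \<longrightarrow> liminf (\<lambda>n. ereal (s n * dist (xs n) x)) \<in> {0, \<infinity>}"
proof -
  let ?\<omega> = "\<lambda>x. liminf (\<lambda>n. ereal (s n * dist (xs n) x))"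
  define Q :: "real set" where "Q = {q \<in> \<rat>. 0 < q}"
  define Bad where "Bad = (\<Union>(c', c, N) \<in> Q \<times> Q \<times> UNIV. scaled_dist_band xs s c' c N \<inter> A)"
  have "countable Q"
    unfolding Q_def by (rule countable_subset[OF _ countable_rat]) auto
  have "Bad \<in> null_sets lborel"
    unfolding Bad_def
  proof (rule null_sets_UN')
    show "countable (Q \<times> Q \<times> (UNIV :: nat set))"
      using \<open>countable Q\<close> by simp
    show "(case i of (c', c, N) \<Rightarrow> scaled_dist_band xs s c' c N \<inter> A) \<in> null_sets lborel"
      if "i \<in> Q \<times> Q \<times> UNIV" for i
      using that s A by (cases i) (auto simp: Q_def intro!: null_sets_scaled_dist_band_Int)
  qed
  moreover have "{x \<in> space lborel. \<not> (x \<in> A \<longrightarrow> ?\<omega> x \<in> {0, \<infinity>})} \<subseteq> Bad"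
  proof (intro subsetI)
    fix x
    assume "x \<in> {x \<in> space lborel. \<not> (x \<in> A \<longrightarrow> ?\<omega> x \<in> {0, \<infinity>})}"
    then have x: "x \<in> A" "?\<omega> x \<notin> {0, \<infinity>}"
      by auto
    have "0 \<le> s n * dist (xs n) x" for n
      using s by (simp add: scale_seq_def less_imp_le)
    from liminf_ereal_between_rationals[of "\<lambda>n. s n * dist (xs n) x", OF this x(2)]
    obtain c' c N where "c' \<in> \<rat>" "c \<in> \<rat>" "0 < c'" "0 < c"
      "\<forall>n\<ge>N. c' \<le> s n * dist (xs n) x" "\<exists>\<^sub>F n in sequentially. s n * dist (xs n) x < c" .
    then have "c' \<in> Q" "c \<in> Q" "x \<in> scaled_dist_band xs s c' c N"
      by (simp_all add: Q_def scaled_dist_band_def)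
    then show "x \<in> Bad"
      using x(1) unfolding Bad_def by (intro UN_I[of "(c', c, N)"]) auto
  qed
  ultimately show ?thesis
    by (rule AE_I')
qed

theorem proposition5p2:
  shows "decisive (restrict_space lborel {0..<1::real}) dist"
  unfolding decisive_def
proof (intro allI impI)
  fix xs :: "nat \<Rightarrow> real" and s
  assume "scale_seq s"
  then have "AE x in lborel. x \<in> {0..<1} \<longrightarrow> liminf (\<lambda>n. ereal (s n * dist (xs n) x)) \<in> {0, \<infinity>}"
    by (rule AE_liminf_scaled_dist_0_or_infinity) auto
  then show "AE x in restrict_space lborel {0..<1}. liminf (\<lambda>n. ereal (s n * dist (xs n) x)) \<in> {0, \<infinity>}"
    by (subst AE_restrict_space_iff) auto
qed

end
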